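(* Let $n\ge3$, $a>0$, $\sigma>1/2$, $b\in\mathbb{R}^n\setminus\{0\}$, and let $V_{-1}(|x+b|)$ and $V_1(|x-b|)$ be real-valued, radially decreasing (about $-b$ and $b$ respectively), smooth potentials of compact support. For an integer $N\ge1$ let $\gamma_N=\sum_{k=-N}^N\gamma_{kb}$. For $j\in\{-1,1\}$ let $S_N^{(j)}=\{x:\ i[V_j(|x-jb|),\gamma_N](x)<0\}$ and let $\chi_N^{(j)}$ be its characteristic function. Then for each $N$ and $j$, $$ i[V_j(|x-jb|),\gamma_N]\ \ge\ -4f(\infty)\,|V_j'(|x-jb|)|\,\chi_N^{(j)}(x), $$ and $S_N^{(j)}\subset\{x:\ |\vec y|\le\delta_N\}\cap\operatorname{supp}V_j(|\cdot-jb|)$ for numbers $\delta_N$ with $\delta_N\to0$ as $N\to\infty$, where $\vec y$ denotes the component of $x$ orthogonal to $b$.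
   Context: Notation: $g(r)=(1+ar^2)^{-\sigma/2}$; $f(r)=\int_0^r g^2(s)\,ds$, $f(\infty)=\lim_{r\to\infty}f(r)=M_\sigma/\sqrt a$ with $M_\sigma=\int_0^\infty(1+s^2)^{-\sigma}ds$; $F(x)=\int_0^{|x|}f(t)\,dt$; $F_c(x)=F(x-c)$, $\gamma_c=i[-\Delta,F_c]$. For a potential $W$, $i[W,\gamma_c]$ is the multiplication operator by $-2\nabla F_c\cdot\nabla W$, so $i[V_j,\gamma_N]$ is a function of $x$. $V_j'$ is the radial derivative. *)

theory Defs
  imports "HOL-Analysis.Analysis"
begin

definition gfun :: "real \<Rightarrow> real \<Rightarrow> real \<Rightarrow> real" where
  "gfun a \<sigma> r = (1 + a * r\<^sup>2) powr (- \<sigma> / 2)"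

definition ffun :: "real \<Rightarrow> real \<Rightarrow> real \<Rightarrow> real" where
  "ffun a \<sigma> r = integral {0..r} (\<lambda>s. (gfun a \<sigma> s)\<^sup>2)"

definition Msig :: "real \<Rightarrow> real" where
  "Msig \<sigma> = integral {0..} (\<lambda>s. (1 + s\<^sup>2) powr (- \<sigma>))"

definition finf :: "real \<Rightarrow> real \<Rightarrow> real" where
  "finf a \<sigma> = Msig \<sigma> / sqrt a"

text \<open>Gradient of F_c(x) = F(x - c), F(x) = int_0^{|x|} f: it equals f(|x-c|) (x-c)/|x-c|
  (and 0 at x = c, where f(0) = 0).\<close>
definition gradF :: "real \<Rightarrow> real \<Rightarrow> 'a::euclidean_space \<Rightarrow> 'a \<Rightarrow> 'a" where
  "gradF a \<sigma> c x = ffun a \<sigma> (norm (x - c)) *\<^sub>R sgn (x - c)"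

definition gradRad :: "(real \<Rightarrow> real) \<Rightarrow> 'a::euclidean_space \<Rightarrow> 'a \<Rightarrow> 'a" where
  "gradRad V p x = deriv V (norm (x - p)) *\<^sub>R sgn (x - p)"

text \<open>i[W, gamma_c] is multiplication by -2 grad F_c . grad W, for W(x) = V(|x-p|);
  i[W, gamma_N] with gamma_N = sum_{k=-N}^N gamma_{kb}.\<close>
definition commN :: "real \<Rightarrow> real \<Rightarrow> 'a::euclidean_space \<Rightarrow> nat \<Rightarrow> (real \<Rightarrow> real) \<Rightarrow> 'a \<Rightarrow> 'a \<Rightarrow> real" where
  "commN a \<sigma> b N V p x =
     (\<Sum>k\<in>{- int N..int N}. - 2 * (gradF a \<sigma> (of_int k *\<^sub>R b) x \<bullet> gradRad V p x))"

coinductive smooth_fun :: "('a::euclidean_space \<Rightarrow> real) \<Rightarrow> bool" where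
  "f differentiable_on UNIV \<Longrightarrow> (\<And>v. smooth_fun (\<lambda>x. frechet_derivative f (at x) v))
     \<Longrightarrow> smooth_fun f"

definition orth_comp :: "'a::euclidean_space \<Rightarrow> 'a \<Rightarrow> 'a" where
  "orth_comp b x = x - ((x \<bullet> b) / (b \<bullet> b)) *\<^sub>R b"

end

theory Submission
  imports Defs
begin

text \<open>
  Write \<open>x = s e + Y\<close> with \<open>e = b/|b|\<close>, \<open>Y \<bottom> b\<close>, \<open>y = |Y|\<close>, and \<open>r\<^sub>k = |x - kb|\<close>. Since
  \<open>(x - kb)\<cdot>(x - jb) = (s - k|b|)(s - j|b|) + y\<^sup>2\<close>, the commutator equals
  \<open>-2 V\<^sub>j'(r\<^sub>j)/r\<^sub>j\<close> times \<open>(s - j|b|) \<Sum>\<^sub>k \<phi>(s - k|b|) + y\<^sup>2 \<Sum>\<^sub>k f(r\<^sub>k)/r\<^sub>k\<close>, where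
  \<open>\<phi>(z) = f(\<surd>(z\<^sup>2+y\<^sup>2)) z/\<surd>(z\<^sup>2+y\<^sup>2)\<close> is odd, nondecreasing and bounded by \<open>f(\<infinity>)\<close>.
  For such \<open>\<phi>\<close> the symmetric lattice sum \<open>\<Sum>\<^sub>k \<phi>(s - k|b|)\<close> has the sign of \<open>s\<close> and is
  at most \<open>2f(\<infinity>)\<close> in absolute value between \<open>0\<close> and \<open>\<plusminus>|b|\<close>, so the first term is at least
  \<open>-2f(\<infinity>) r\<^sub>j\<close>; as \<open>V\<^sub>j' \<le> 0\<close> this gives the lower bound \<open>-4f(\<infinity>)|V\<^sub>j'|\<close>.
  Where the commutator is negative, \<open>V\<^sub>j' \<noteq> 0\<close> (so \<open>x\<close> lies in the support) and
  \<open>y\<^sup>2 \<Sum>\<^sub>k f(r\<^sub>k)/r\<^sub>k < 2f(\<infinity>) r\<^sub>j\<close>; the sum grows like \<open>f(y) log N\<close> because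
  \<open>r\<^sub>k \<le> (r\<^sub>j + |b|)(|k| + 1)\<close>, which forces \<open>y \<rightarrow> 0\<close> uniformly on the bounded support.
\<close>

lemma one_plus_mult_sq_pos: "(a::real) \<ge> 0 \<Longrightarrow> 0 < 1 + a * s\<^sup>2"
  by (simp add: add_pos_nonneg)

lemma gfun_sq: "a \<ge> 0 \<Longrightarrow> (gfun a \<sigma> s)\<^sup>2 = (1 + a * s\<^sup>2) powr (- \<sigma>)"
  unfolding gfun_def power2_eq_square by (simp add: add_pos_nonneg flip: powr_add)

lemma integrable_powr_one_plus_sq:
  "a \<ge> 0 \<Longrightarrow> (\<lambda>s::real. (1 + a * s\<^sup>2) powr (- \<sigma>)) integrable_on {u..v}"
  by (intro integrable_continuous_interval continuous_intros ballI)
     (metis one_plus_mult_sq_pos less_irrefl)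

lemma ffun_eq_integral: "a \<ge> 0 \<Longrightarrow> ffun a \<sigma> r = integral {0..r} (\<lambda>s. (1 + a * s\<^sup>2) powr (- \<sigma>))"
  unfolding ffun_def by (simp add: gfun_sq)

lemma ffun_nonneg: "a \<ge> 0 \<Longrightarrow> 0 \<le> ffun a \<sigma> r"
  unfolding ffun_eq_integral by (intro integral_nonneg integrable_powr_one_plus_sq) auto

lemma ffun_mono: "a \<ge> 0 \<Longrightarrow> 0 \<le> r \<Longrightarrow> r \<le> r' \<Longrightarrow> ffun a \<sigma> r \<le> ffun a \<sigma> r'"
  unfolding ffun_eq_integral by (intro integral_subset_le integrable_powr_one_plus_sq) auto

lemma ffun_ge_min:
  assumes "a \<ge> 0" "0 \<le> r" "\<sigma> \<ge> 0"
  shows "(1 + a) powr (- \<sigma>) * min r 1 \<le> ffun a \<sigma> r"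
proof -
  have "(1 + a) powr (- \<sigma>) * min r 1 = integral {0..min r 1} (\<lambda>s. (1 + a) powr (- \<sigma>))"
    using assms by simp
  also have "\<dots> \<le> ffun a \<sigma> (min r 1)"
    unfolding ffun_eq_integral[OF assms(1)]
  proof (intro integral_le integrable_powr_one_plus_sq assms(1) integrable_const_ivl)
    fix s assume "s \<in> {0..min r 1}"
    then have "s\<^sup>2 \<le> 1" by (simp add: abs_square_le_1)
    then have "1 + a * s\<^sup>2 \<le> 1 + a" using assms mult_left_mono[of "s\<^sup>2" 1 a] by simp
    then show "(1 + a) powr (- \<sigma>) \<le> (1 + a * s\<^sup>2) powr (- \<sigma>)"
      using assms one_plus_mult_sq_pos by (intro powr_mono2') auto
  qed
  also have "\<dots> \<le> ffun a \<sigma> r"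
    using assms by (intro ffun_mono) auto
  finally show ?thesis .
qed

lemma integrable_max_one_powr:
  assumes "\<sigma> > 1/2"
  shows "(\<lambda>u::real. max u 1 powr (- 2 * \<sigma>)) integrable_on {0..}"
proof -
  have "((\<lambda>u::real. u powr (- 2 * \<sigma>)) has_integral - (1 powr (- 2 * \<sigma> + 1)) / (- 2 * \<sigma> + 1)) {1..}"
    using assms by (intro has_integral_powr_to_inf) auto
  then have "((\<lambda>u::real. max u 1 powr (- 2 * \<sigma>)) has_integral - (1 powr (- 2 * \<sigma> + 1)) / (- 2 * \<sigma> + 1)) {1..}"
    by (rule has_integral_eq[rotated]) (simp add: max_def)
  then have "(\<lambda>u::real. max u 1 powr (- 2 * \<sigma>)) integrable_on {1..}"
    unfolding integrable_on_def by blast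
  moreover have "(\<lambda>u::real. max u 1 powr (- 2 * \<sigma>)) integrable_on {0..1}"
    by (intro integrable_continuous_interval continuous_intros) auto
  ultimately have "(\<lambda>u::real. max u 1 powr (- 2 * \<sigma>)) integrable_on ({0..1} \<union> {1..})"
    by (intro integrable_Un) (auto intro: negligible_finite)
  moreover have "{0..1} \<union> {1..} = {0::real..}" by auto
  ultimately show ?thesis by simp
qed

lemma integrable_powr_one_plus_sq_nonneg:
  assumes "\<sigma> > 1/2"
  shows "(\<lambda>s::real. (1 + s\<^sup>2) powr (- \<sigma>)) integrable_on {0..}"
proof (rule integrable_on_all_intervals_integrable_bound[OF _ _ integrable_max_one_powr[OF assms]])
  fix l u :: real
  have "{0..} \<inter> cbox l u = {max 0 l..u}" by auto
  then show "(\<lambda>s. if s \<in> {0..} then (1 + s\<^sup>2) powr (- \<sigma>) else 0) integrable_on cbox l u"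
    unfolding integrable_restrict_Int using integrable_powr_one_plus_sq[of 1 \<sigma> "max 0 l" u] by simp
next
  fix s :: real assume "s \<in> {0..}"
  have "(max s 1)\<^sup>2 \<le> 1 + s\<^sup>2" by (simp add: max_def)
  then have "(1 + s\<^sup>2) powr (- \<sigma>) \<le> ((max s 1)\<^sup>2) powr (- \<sigma>)"
    using assms by (intro powr_mono2') auto
  also have "(max s 1)\<^sup>2 = max s 1 powr (2::real)"
    using powr_realpow[of "max s 1" 2] by simp
  also have "(max s 1 powr (2::real)) powr (- \<sigma>) = max s 1 powr (2 * - \<sigma>)"
    by (rule powr_powr)
  finally show "norm ((1 + s\<^sup>2) powr (- \<sigma>)) \<le> max s 1 powr (- 2 * \<sigma>)" by simp
qed

lemma ffun_le_finf:
  assumes a: "a > 0" and "\<sigma> > 1/2" and "0 \<le> r"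
  shows "ffun a \<sigma> r \<le> finf a \<sigma>"
proof -
  let ?h = "\<lambda>u. (1 + u\<^sup>2) powr (- \<sigma>)"
  have "ffun a \<sigma> r = integral ((\<lambda>u. u / sqrt a) ` {0..sqrt a * r}) (\<lambda>s. ?h (sqrt a * s))"
    using a by (simp add: ffun_eq_integral image_divide_atLeastAtMost power_mult_distrib)
  also have "\<dots> = integral {0..sqrt a * r} ?h / sqrt a"
    using a by (subst integral_stretch_real) auto
  also have "\<dots> \<le> integral {0..} ?h / sqrt a"
    using assms integrable_powr_one_plus_sq[of 1 \<sigma>]
    by (intro divide_right_mono integral_subset_le integrable_powr_one_plus_sq_nonneg) auto
  finally show ?thesis unfolding finf_def Msig_def .
qed

lemma finf_nonneg: "a > 0 \<Longrightarrow> \<sigma> > 1/2 \<Longrightarrow> 0 \<le> finf a \<sigma>"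
  using ffun_nonneg[of a \<sigma> 0] ffun_le_finf[of a \<sigma> 0] by simp

lemma sum_int_interval_shift:
  fixes h :: "int \<Rightarrow> 'a::ab_group_add"
  shows "(\<Sum>k\<in>{- int N..int N}. h (k + 1)) = (\<Sum>k\<in>{- int N..int N}. h k) + h (int N + 1) - h (- int N)"
proof (induction N)
  case (Suc N)
  have "{- int (Suc N)..int (Suc N)} = insert (- int N - 1) (insert (int N + 1) {- int N..int N})"
    by auto
  moreover have "h (- 1 - int N) = h (- int N - 1)" by (rule arg_cong[where f = h]) simp
  ultimately show ?case using Suc by (simp add: algebra_simps)
qed simp

lemma sum_int_interval_reflect:
  fixes h :: "int \<Rightarrow> 'a::comm_monoid_add"
  shows "(\<Sum>k\<in>{- int N..int N}. h (- k)) = (\<Sum>k\<in>{- int N..int N}. h k)"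
  by (rule sum.reindex_bij_witness[of _ uminus uminus]) auto

definition lattice_sum :: "(real \<Rightarrow> real) \<Rightarrow> real \<Rightarrow> nat \<Rightarrow> real \<Rightarrow> real" where
  "lattice_sum \<phi> \<beta> N s = (\<Sum>k\<in>{- int N..int N}. \<phi> (s - of_int k * \<beta>))"

locale odd_mono_bounded =
  fixes \<phi> :: "real \<Rightarrow> real" and M :: real
  assumes odd: "\<And>z. \<phi> (- z) = - \<phi> z"
    and mono: "\<And>z w. z \<le> w \<Longrightarrow> \<phi> z \<le> \<phi> w"
    and bounded: "\<And>z. \<bar>\<phi> z\<bar> \<le> M"
begin

lemma lattice_sum_odd: "lattice_sum \<phi> \<beta> N (- s) = - lattice_sum \<phi> \<beta> N s"
proof -
  have "lattice_sum \<phi> \<beta> N (- s) = (\<Sum>k\<in>{- int N..int N}. \<phi> (- s - of_int (- k) * \<beta>))"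
    unfolding lattice_sum_def by (rule sum_int_interval_reflect[symmetric])
  also have "\<dots> = (\<Sum>k\<in>{- int N..int N}. - \<phi> (s - of_int k * \<beta>))"
    by (intro sum.cong refl) (simp flip: odd)
  finally show ?thesis by (simp add: lattice_sum_def sum_negf)
qed

text \<open>Pairing the terms \<open>k\<close> and \<open>-k\<close>: \<open>\<phi> (s + k\<beta>) \<ge> \<phi> (k\<beta> - s) = - \<phi> (s - k\<beta>)\<close>.\<close>
lemma lattice_sum_nonneg:
  assumes "0 \<le> s"
  shows "0 \<le> lattice_sum \<phi> \<beta> N s"
proof -
  have "2 * lattice_sum \<phi> \<beta> N s
      = (\<Sum>k\<in>{- int N..int N}. \<phi> (s - of_int k * \<beta>) + \<phi> (s - of_int (- k) * \<beta>))"
    unfolding lattice_sum_def sum.distrib sum_int_interval_reflect[of "\<lambda>k. \<phi> (s - of_int k * \<beta>)"]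
    by simp
  also have "\<dots> \<ge> 0"
  proof (rule sum_nonneg)
    fix k :: int
    have "\<phi> (of_int k * \<beta> - s) \<le> \<phi> (s + of_int k * \<beta>)" using assms by (intro mono) simp
    then show "0 \<le> \<phi> (s - of_int k * \<beta>) + \<phi> (s - of_int (- k) * \<beta>)"
      using odd[of "s - of_int k * \<beta>"] by simp
  qed
  finally show ?thesis by simp
qed

lemma lattice_sum_nonpos: "s \<le> 0 \<Longrightarrow> lattice_sum \<phi> \<beta> N s \<le> 0"
  using lattice_sum_nonneg[of "- s" \<beta> N] by (simp add: lattice_sum_odd)

lemma lattice_sum_le:
  assumes "0 \<le> s" "s \<le> \<beta>"
  shows "lattice_sum \<phi> \<beta> N s \<le> 2 * M"
proof -
  have "lattice_sum \<phi> \<beta> N (s - \<beta>)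
      = lattice_sum \<phi> \<beta> N s + \<phi> (s - (of_int (int N) + 1) * \<beta>) - \<phi> (s + of_int (int N) * \<beta>)"
    unfolding lattice_sum_def
    using sum_int_interval_shift[of "\<lambda>k. \<phi> (s - of_int k * \<beta>)" N]
    by (simp add: algebra_simps)
  moreover have "lattice_sum \<phi> \<beta> N (s - \<beta>) \<le> 0" using assms by (intro lattice_sum_nonpos) simp
  moreover have "\<bar>\<phi> (s - (of_int (int N) + 1) * \<beta>)\<bar> \<le> M" "\<bar>\<phi> (s + of_int (int N) * \<beta>)\<bar> \<le> M"
    by (rule bounded)+
  ultimately show ?thesis by linarith
qed

lemma lattice_sum_mult_ge:
  assumes "0 \<le> \<beta>" "j \<in> {-1, 1}"
  shows "- 2 * M * \<bar>s - of_int j * \<beta>\<bar> \<le> (s - of_int j * \<beta>) * lattice_sum \<phi> \<beta> N s"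
proof -
  have M: "0 \<le> M" using bounded[of 0] by simp
  have right: "- 2 * M * \<bar>t - \<beta>\<bar> \<le> (t - \<beta>) * lattice_sum \<phi> \<beta> N t" for t
  proof -
    have "0 \<le> 2 * M * \<bar>t - \<beta>\<bar>" using M by simp
    consider "t \<le> 0" | "\<beta> \<le> t" | "0 < t" "t < \<beta>" by linarith
    then show ?thesis
    proof cases
      case 1
      then have "0 \<le> (t - \<beta>) * lattice_sum \<phi> \<beta> N t"
        using assms lattice_sum_nonpos by (intro mult_nonpos_nonpos) auto
      with \<open>0 \<le> 2 * M * \<bar>t - \<beta>\<bar>\<close> show ?thesis by linarith
    next
      case 2
      then have "0 \<le> (t - \<beta>) * lattice_sum \<phi> \<beta> N t"
        using assms lattice_sum_nonneg by (intro mult_nonneg_nonneg) auto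
      with \<open>0 \<le> 2 * M * \<bar>t - \<beta>\<bar>\<close> show ?thesis by linarith
    next
      case 3
      then have "(t - \<beta>) * (2 * M) \<le> (t - \<beta>) * lattice_sum \<phi> \<beta> N t"
        by (intro mult_left_mono_neg lattice_sum_le) auto
      then show ?thesis using 3 by (simp add: abs_if algebra_simps)
    qed
  qed
  from assms(2) consider "j = 1" | "j = -1" by auto
  then show ?thesis
  proof cases
    case 2
    have "\<bar>- s - \<beta>\<bar> = \<bar>s + \<beta>\<bar>" by arith
    moreover have "(- s - \<beta>) * lattice_sum \<phi> \<beta> N (- s) = (s + \<beta>) * lattice_sum \<phi> \<beta> N s"
      by (simp add: lattice_sum_odd algebra_simps)
    ultimately show ?thesis using 2 right[of "- s"] by simp
  qed (use right in simp)
qed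

end

lemma inner_diff_scaleR_eq_orth_comp:
  fixes b x :: "'a::euclidean_space"
  shows "(x - c *\<^sub>R b) \<bullet> (x - d *\<^sub>R b)
    = (x \<bullet> sgn b - c * norm b) * (x \<bullet> sgn b - d * norm b) + (norm (orth_comp b x))\<^sup>2"
proof (cases "b = 0")
  case False
  define e where "e = sgn b"
  define s where "s = x \<bullet> e"
  have e: "e \<bullet> e = 1" "b = norm b *\<^sub>R e"
    using False by (metis e_def norm_eq_1 norm_sgn) (simp add: e_def sgn_div_norm False)
  have "orth_comp b x = x - s *\<^sub>R e"
    using False unfolding orth_comp_def s_def e_def
    by (simp add: sgn_div_norm power2_norm_eq_inner[symmetric] power2_eq_square field_simps)
  moreover have "c *\<^sub>R b = (c * norm b) *\<^sub>R e" for c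
    by (subst e(2)) simp
  ultimately have decomp: "x - c *\<^sub>R b = (s - c * norm b) *\<^sub>R e + orth_comp b x" for c
    by (simp add: algebra_simps)
  have "e \<bullet> orth_comp b x = 0"
    unfolding \<open>orth_comp b x = x - s *\<^sub>R e\<close> s_def by (simp add: inner_diff_right e(1) inner_commute)
  then show ?thesis
    unfolding decomp e_def[symmetric] s_def[symmetric]
    by (simp add: inner_add_left inner_add_right e(1) inner_commute power2_norm_eq_inner)
qed (simp add: orth_comp_def power2_norm_eq_inner)

lemma norm_diff_scaleR_eq_orth_comp:
  fixes b x :: "'a::euclidean_space"
  shows "norm (x - c *\<^sub>R b) = sqrt ((x \<bullet> sgn b - c * norm b)\<^sup>2 + (norm (orth_comp b x))\<^sup>2)"
  using inner_diff_scaleR_eq_orth_comp[of x c b c]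
  by (metis norm_eq_sqrt_inner power2_eq_square)

lemma norm_orth_comp_le: "norm (orth_comp b x) \<le> norm (x - c *\<^sub>R b)"
  unfolding norm_diff_scaleR_eq_orth_comp by simp

lemma abs_inner_sgn_diff_le:
  fixes b x :: "'a::euclidean_space"
  shows "\<bar>x \<bullet> sgn b - c * norm b\<bar> \<le> norm (x - c *\<^sub>R b)"
  using real_sqrt_sum_squares_ge1[of "\<bar>x \<bullet> sgn b - c * norm b\<bar>" "norm (orth_comp b x)"]
  by (simp add: norm_diff_scaleR_eq_orth_comp[of x c b])

text \<open>The component along \<open>b\<close> of \<open>\<nabla>F\<^sub>c\<close> at a point whose offset from \<open>c\<close> along \<open>b\<close> is \<open>z\<close>
  and whose distance from the axis \<open>\<real>b\<close> is \<open>y\<close>.\<close>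
definition axial_field :: "real \<Rightarrow> real \<Rightarrow> real \<Rightarrow> real \<Rightarrow> real" where
  "axial_field a \<sigma> y z = ffun a \<sigma> (sqrt (z\<^sup>2 + y\<^sup>2)) * z / sqrt (z\<^sup>2 + y\<^sup>2)"

lemma axial_field_odd: "axial_field a \<sigma> y (- z) = - axial_field a \<sigma> y z"
  unfolding axial_field_def by simp

lemma divide_sqrt_sum_squares_mono:
  fixes y z w :: real
  assumes "0 \<le> z" "z \<le> w"
  shows "z / sqrt (z\<^sup>2 + y\<^sup>2) \<le> w / sqrt (w\<^sup>2 + y\<^sup>2)"
proof (cases "z = 0")
  case False
  then have pos: "0 < z" "0 < w" using assms by auto
  have "z\<^sup>2 * y\<^sup>2 \<le> w\<^sup>2 * y\<^sup>2"
    using assms by (intro mult_right_mono power_mono) auto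
  then have "z\<^sup>2 * (w\<^sup>2 + y\<^sup>2) \<le> w\<^sup>2 * (z\<^sup>2 + y\<^sup>2)"
    by (simp add: algebra_simps)
  then have "sqrt (z\<^sup>2 * (w\<^sup>2 + y\<^sup>2)) \<le> sqrt (w\<^sup>2 * (z\<^sup>2 + y\<^sup>2))"
    by (rule real_sqrt_le_mono)
  then have "z * sqrt (w\<^sup>2 + y\<^sup>2) \<le> w * sqrt (z\<^sup>2 + y\<^sup>2)"
    using pos by (simp add: real_sqrt_mult)
  moreover have "0 < sqrt (z\<^sup>2 + y\<^sup>2)" "0 < sqrt (w\<^sup>2 + y\<^sup>2)"
    using pos by (simp_all add: add_pos_nonneg)
  ultimately show ?thesis
    by (simp add: divide_le_eq le_divide_eq mult.commute mult.left_commute)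
qed (use assms in simp)

lemma axial_field_mono_nonneg:
  assumes "a \<ge> 0" "0 \<le> z" "z \<le> w"
  shows "axial_field a \<sigma> y z \<le> axial_field a \<sigma> y w"
proof -
  have "ffun a \<sigma> (sqrt (z\<^sup>2 + y\<^sup>2)) \<le> ffun a \<sigma> (sqrt (w\<^sup>2 + y\<^sup>2))"
    using assms by (intro ffun_mono) (auto simp: power_mono)
  then have "ffun a \<sigma> (sqrt (z\<^sup>2 + y\<^sup>2)) * (z / sqrt (z\<^sup>2 + y\<^sup>2))
      \<le> ffun a \<sigma> (sqrt (w\<^sup>2 + y\<^sup>2)) * (w / sqrt (w\<^sup>2 + y\<^sup>2))"
    using assms ffun_nonneg divide_sqrt_sum_squares_mono by (intro mult_mono) auto
  then show ?thesis unfolding axial_field_def by simp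
qed

lemma axial_field_mono:
  assumes "a \<ge> 0" "z \<le> w"
  shows "axial_field a \<sigma> y z \<le> axial_field a \<sigma> y w"
proof -
  have nonneg: "0 \<le> axial_field a \<sigma> y t" if "0 \<le> t" for t
    using axial_field_mono_nonneg[OF assms(1) order_refl that] by (simp add: axial_field_def)
  consider "0 \<le> z" | "z < 0" "0 \<le> w" | "w < 0" by linarith
  then show ?thesis
  proof cases
    case 1
    then show ?thesis by (rule axial_field_mono_nonneg[OF assms(1) _ assms(2)])
  next
    case 2
    then show ?thesis using nonneg[of w] nonneg[of "- z"] axial_field_odd[of a \<sigma> y z] by linarith
  next
    case 3
    then have "axial_field a \<sigma> y (- w) \<le> axial_field a \<sigma> y (- z)"
      using assms by (intro axial_field_mono_nonneg) auto
    then show ?thesis using axial_field_odd[of a \<sigma> y z] axial_field_odd[of a \<sigma> y w] by linarith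
  qed
qed

lemma abs_axial_field_le:
  assumes "a > 0" "\<sigma> > 1/2"
  shows "\<bar>axial_field a \<sigma> y z\<bar> \<le> finf a \<sigma>"
proof -
  let ?r = "sqrt (z\<^sup>2 + y\<^sup>2)"
  have "\<bar>z\<bar> \<le> ?r" using real_sqrt_sum_squares_ge1[of "\<bar>z\<bar>" y] by simp
  have "\<bar>z / ?r\<bar> \<le> 1"
  proof (cases "?r = 0")
    case False
    moreover have "0 \<le> ?r" by simp
    ultimately have "?r > 0" by linarith
    then show ?thesis using \<open>\<bar>z\<bar> \<le> ?r\<close> by (simp add: abs_divide divide_le_eq_1_pos)
  qed simp
  have f: "0 \<le> ffun a \<sigma> ?r" using assms by (intro ffun_nonneg) simp
  have "\<bar>axial_field a \<sigma> y z\<bar> = ffun a \<sigma> ?r * \<bar>z / ?r\<bar>"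
    unfolding axial_field_def times_divide_eq_right[symmetric] abs_mult using f by simp
  also have "\<dots> \<le> ffun a \<sigma> ?r"
    using \<open>\<bar>z / ?r\<bar> \<le> 1\<close> f mult_left_mono[of "\<bar>z / ?r\<bar>" 1 "ffun a \<sigma> ?r"] by simp
  also have "\<dots> \<le> finf a \<sigma>" using assms by (intro ffun_le_finf) auto
  finally show ?thesis .
qed

lemma odd_mono_bounded_axial_field:
  assumes "a > 0" "\<sigma> > 1/2"
  shows "odd_mono_bounded (axial_field a \<sigma> y) (finf a \<sigma>)"
proof
  show "axial_field a \<sigma> y (- z) = - axial_field a \<sigma> y z" for z
    by (rule axial_field_odd)
  show "axial_field a \<sigma> y z \<le> axial_field a \<sigma> y w" if "z \<le> w" for z w
    using assms that by (intro axial_field_mono) auto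
  show "\<bar>axial_field a \<sigma> y z\<bar> \<le> finf a \<sigma>" for z
    using assms by (rule abs_axial_field_le)
qed

definition ffun_ratio_sum :: "real \<Rightarrow> real \<Rightarrow> 'a::euclidean_space \<Rightarrow> nat \<Rightarrow> 'a \<Rightarrow> real" where
  "ffun_ratio_sum a \<sigma> b N x =
     (\<Sum>k\<in>{- int N..int N}. ffun a \<sigma> (norm (x - of_int k *\<^sub>R b)) / norm (x - of_int k *\<^sub>R b))"

lemma commN_eq:
  fixes b x :: "'a::euclidean_space" and j :: int
  defines "s \<equiv> x \<bullet> sgn b" and "y \<equiv> norm (orth_comp b x)" and "r \<equiv> norm (x - of_int j *\<^sub>R b)"
  shows "commN a \<sigma> b N V (of_int j *\<^sub>R b) x = - 2 * deriv V r / r *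
    ((s - of_int j * norm b) * lattice_sum (axial_field a \<sigma> y) (norm b) N s
      + y\<^sup>2 * ffun_ratio_sum a \<sigma> b N x)"
proof -
  have summand: "- 2 * (gradF a \<sigma> (of_int k *\<^sub>R b) x \<bullet> gradRad V (of_int j *\<^sub>R b) x)
    = - 2 * deriv V r / r * ((s - of_int j * norm b) * axial_field a \<sigma> y (s - of_int k * norm b)
        + y\<^sup>2 * (ffun a \<sigma> (norm (x - of_int k *\<^sub>R b)) / norm (x - of_int k *\<^sub>R b)))" for k :: int
  proof -
    define r\<^sub>k where "r\<^sub>k = norm (x - of_int k *\<^sub>R b)"
    have "sqrt ((s - of_int k * norm b)\<^sup>2 + y\<^sup>2) = r\<^sub>k"
      unfolding r\<^sub>k_def s_def y_def by (rule norm_diff_scaleR_eq_orth_comp[symmetric])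
    moreover have "gradF a \<sigma> (of_int k *\<^sub>R b) x \<bullet> gradRad V (of_int j *\<^sub>R b) x
      = ffun a \<sigma> r\<^sub>k * deriv V r / (r\<^sub>k * r) * ((x - of_int k *\<^sub>R b) \<bullet> (x - of_int j *\<^sub>R b))"
      unfolding gradF_def gradRad_def r\<^sub>k_def r_def by (simp add: sgn_div_norm divide_inverse)
    ultimately show ?thesis
      unfolding inner_diff_scaleR_eq_orth_comp axial_field_def r\<^sub>k_def[symmetric]
      by (simp add: s_def y_def divide_inverse algebra_simps)
  qed
  show ?thesis
    unfolding commN_def summand lattice_sum_def ffun_ratio_sum_def
    by (simp only: sum_distrib_left sum.distrib distrib_left)
qed

lemma radial_has_real_derivative:
  fixes p x :: "'a::euclidean_space" and V :: "real \<Rightarrow> real"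
  assumes diff: "(\<lambda>z. V (norm (z - p))) differentiable at x" and "x \<noteq> p"
  shows "(V has_real_derivative deriv V (norm (x - p))) (at (norm (x - p)))"
proof -
  let ?r = "norm (x - p)" and ?u = "sgn (x - p)"
  have "(\<lambda>t. p + t *\<^sub>R ?u) differentiable at ?r"
    by (rule differentiableI) (auto intro!: derivative_eq_intros)
  moreover have "p + ?r *\<^sub>R ?u = x" using \<open>x \<noteq> p\<close> by (simp add: sgn_div_norm)
  ultimately have "(\<lambda>t. V (norm (p + t *\<^sub>R ?u - p))) differentiable at ?r"
    using differentiable_compose[of "\<lambda>z. V (norm (z - p))" "\<lambda>t. p + t *\<^sub>R ?u"] diff
    by (simp add: o_def)
  moreover have "(\<lambda>t. V (norm (p + t *\<^sub>R ?u - p))) = (\<lambda>t. V \<bar>t\<bar>)"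
    using \<open>x \<noteq> p\<close> by (simp add: norm_sgn)
  ultimately have "(\<lambda>t. V \<bar>t\<bar>) differentiable at ?r" by simp
  then obtain D where "((\<lambda>t. V \<bar>t\<bar>) has_real_derivative D) (at ?r)"
    unfolding real_differentiable_def by blast
  then have "(V has_real_derivative D) (at ?r)"
    by (rule has_field_derivative_transform_within_open[of _ _ _ "{0<..}"]) (use \<open>x \<noteq> p\<close> in auto)
  then show ?thesis by (metis DERIV_imp_deriv)
qed

lemma has_real_derivative_nonpos_if_decreasing:
  fixes V :: "real \<Rightarrow> real"
  assumes "(V has_real_derivative D) (at r)" and "\<And>s. r \<le> s \<Longrightarrow> V s \<le> V r"
  shows "D \<le> 0"
proof (rule ccontr)
  assume "\<not> D \<le> 0"
  then obtain d where "d > 0" "\<And>h. 0 < h \<Longrightarrow> h < d \<Longrightarrow> V r < V (r + h)"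
    using DERIV_pos_inc_right[OF assms(1)] by force
  then have "V r < V (r + d / 2)" by simp
  moreover have "V (r + d / 2) \<le> V r" using \<open>d > 0\<close> assms(2)[of "r + d / 2"] by simp
  ultimately show False by simp
qed

lemma deriv_radial_eq_0_outside_support:
  fixes p x :: "'a::euclidean_space" and V :: "real \<Rightarrow> real"
  assumes "x \<notin> closure {z. V (norm (z - p)) \<noteq> 0}" and "x \<noteq> p"
  shows "deriv V (norm (x - p)) = 0"
proof -
  let ?S = "{z. V (norm (z - p)) \<noteq> 0}" and ?r = "norm (x - p)" and ?u = "sgn (x - p)"
  have "open (- closure ?S)" by (rule open_Compl) simp
  then obtain e where "e > 0" and e: "ball x e \<subseteq> - closure ?S"
    using assms(1) open_contains_ball_eq by (metis ComplI)
  have "V t = 0" if t: "t \<in> {0<..} \<inter> ball ?r e" for t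
  proof -
    have "x - (p + t *\<^sub>R ?u) = (?r - t) *\<^sub>R ?u"
      using \<open>x \<noteq> p\<close> by (simp add: sgn_div_norm algebra_simps)
    then have "p + t *\<^sub>R ?u \<in> ball x e"
      using t \<open>x \<noteq> p\<close> by (simp add: dist_norm norm_sgn dist_real_def)
    then have "p + t *\<^sub>R ?u \<notin> ?S"
      using e closure_subset[of ?S] by (meson ComplD subsetD)
    then show ?thesis using t \<open>x \<noteq> p\<close> by (simp add: norm_sgn)
  qed
  then have "(V has_real_derivative 0) (at ?r)"
    using \<open>e > 0\<close> \<open>x \<noteq> p\<close>
    by (rule_tac has_field_derivative_transform_within_open[of "\<lambda>_. 0" _ _ "{0<..} \<inter> ball ?r e"]) auto
  then show ?thesis by (rule DERIV_imp_deriv)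
qed

lemma harm_mult_le_sum:
  fixes g :: "int \<Rightarrow> real"
  assumes "\<And>k. k \<in> {- int N..int N} \<Longrightarrow> 0 \<le> g k"
    and "\<And>n. n \<in> {1..Suc N} \<Longrightarrow> c / real n \<le> g (int n - 1)"
  shows "c * harm (Suc N) \<le> (\<Sum>k\<in>{- int N..int N}. g k)"
proof -
  have "c * harm (Suc N) = (\<Sum>n\<in>{1..Suc N}. c / real n)"
    unfolding harm_def by (simp only: sum_distrib_left divide_inverse)
  also have "\<dots> \<le> (\<Sum>n\<in>{1..Suc N}. g (int n - 1))" by (intro sum_mono assms(2))
  also have "\<dots> = (\<Sum>k\<in>(\<lambda>n. int n - 1) ` {1..Suc N}. g k)"
    by (subst sum.reindex) (auto simp: inj_on_def)
  also have "\<dots> \<le> (\<Sum>k\<in>{- int N..int N}. g k)"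
    using assms(1) by (intro sum_mono2) auto
  finally show ?thesis .
qed

text \<open>The centres \<open>kb\<close>, \<open>0 \<le> k \<le> N\<close>, lie within distance \<open>(r + |b|) (k + 1)\<close> of \<open>x\<close>, and
  \<open>f(r\<^sub>k) \<ge> f(y)\<close>; summing \<open>1/(k + 1)\<close> gives the harmonic number.\<close>
lemma ffun_ratio_sum_ge:
  fixes b x :: "'a::euclidean_space" and j :: int
  defines "y \<equiv> norm (orth_comp b x)" and "r \<equiv> norm (x - of_int j *\<^sub>R b)"
  assumes "a \<ge> 0" "j \<in> {-1, 1}" "y > 0"
  shows "ffun a \<sigma> y / (r + norm b) * harm (Suc N) \<le> ffun_ratio_sum a \<sigma> b N x"
  unfolding ffun_ratio_sum_def
proof (rule harm_mult_le_sum)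
  show "0 \<le> ffun a \<sigma> (norm (x - of_int k *\<^sub>R b)) / norm (x - of_int k *\<^sub>R b)" for k
    using assms by (simp add: ffun_nonneg)
next
  fix n :: nat assume n: "n \<in> {1..Suc N}"
  define r\<^sub>n where "r\<^sub>n = norm (x - of_int (int n - 1) *\<^sub>R b)"
  have "y \<le> r\<^sub>n" unfolding y_def r\<^sub>n_def by (rule norm_orth_comp_le)
  have "x - of_int (int n - 1) *\<^sub>R b = (x - of_int j *\<^sub>R b) + (of_int j - of_int (int n - 1)) *\<^sub>R b"
    by (simp add: algebra_simps)
  then have "r\<^sub>n \<le> r + \<bar>of_int j - of_int (int n - 1)\<bar> * norm b"
    unfolding r\<^sub>n_def r_def by (metis norm_triangle_ineq norm_scaleR)
  also have "\<dots> \<le> r + real n * norm b"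
    using assms(4) n by (intro add_left_mono mult_right_mono) auto
  also have "\<dots> \<le> (r + norm b) * real n"
    using n by (simp add: algebra_simps mult_le_cancel_right1 r_def)
  finally have "r\<^sub>n \<le> (r + norm b) * real n" .
  moreover have "0 < r\<^sub>n" using \<open>y \<le> r\<^sub>n\<close> \<open>y > 0\<close> by linarith
  moreover from calculation have "0 < (r + norm b) * real n" by linarith
  ultimately have "0 < (r + norm b) * real n * r\<^sub>n" using mult_pos_pos by blast
  then have "ffun a \<sigma> y / ((r + norm b) * real n) \<le> ffun a \<sigma> y / r\<^sub>n"
    using \<open>r\<^sub>n \<le> (r + norm b) * real n\<close> \<open>a \<ge> 0\<close> by (intro divide_left_mono ffun_nonneg)
  also have "\<dots> \<le> ffun a \<sigma> r\<^sub>n / r\<^sub>n"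
    using ffun_mono[OF \<open>a \<ge> 0\<close> _ \<open>y \<le> r\<^sub>n\<close>] \<open>y > 0\<close> \<open>0 < r\<^sub>n\<close>
    by (simp add: divide_right_mono)
  finally show "ffun a \<sigma> y / (r + norm b) / real n
      \<le> ffun a \<sigma> (norm (x - of_int (int n - 1) *\<^sub>R b)) / norm (x - of_int (int n - 1) *\<^sub>R b)"
    by (simp add: r\<^sub>n_def)
qed

context
  fixes a \<sigma> :: real and b :: "'a::euclidean_space" and V :: "real \<Rightarrow> real" and j :: int
  assumes a_pos: "a > 0" and sigma: "\<sigma> > 1/2" and j: "j \<in> {-1, 1}"
    and differentiable: "\<And>x. (\<lambda>z. V (norm (z - of_int j *\<^sub>R b))) differentiable at x"
    and decreasing: "\<And>r s. 0 \<le> r \<Longrightarrow> r \<le> s \<Longrightarrow> V s \<le> V r"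
begin

lemma deriv_radial_nonpos: "x \<noteq> of_int j *\<^sub>R b \<Longrightarrow> deriv V (norm (x - of_int j *\<^sub>R b)) \<le> 0"
  by (intro has_real_derivative_nonpos_if_decreasing[OF radial_has_real_derivative] differentiable
      decreasing) auto

lemma axial_part_ge:
  fixes x :: 'a
  defines "s \<equiv> x \<bullet> sgn b"
  shows "- 2 * finf a \<sigma> * norm (x - of_int j *\<^sub>R b)
    \<le> (s - of_int j * norm b) * lattice_sum (axial_field a \<sigma> (norm (orth_comp b x))) (norm b) N s"
proof -
  interpret odd_mono_bounded "axial_field a \<sigma> (norm (orth_comp b x))" "finf a \<sigma>"
    using a_pos sigma by (rule odd_mono_bounded_axial_field)
  have "- 2 * finf a \<sigma> * norm (x - of_int j *\<^sub>R b) \<le> - 2 * finf a \<sigma> * \<bar>s - of_int j * norm b\<bar>"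
    unfolding s_def using abs_inner_sgn_diff_le finf_nonneg[OF a_pos sigma] by (intro mult_left_mono_neg) auto
  also have "\<dots> \<le> (s - of_int j * norm b) * lattice_sum (axial_field a \<sigma> (norm (orth_comp b x))) (norm b) N s"
    using j by (intro lattice_sum_mult_ge) auto
  finally show ?thesis .
qed

lemma commN_ge:
  "- 4 * finf a \<sigma> * \<bar>deriv V (norm (x - of_int j *\<^sub>R b))\<bar> \<le> commN a \<sigma> b N V (of_int j *\<^sub>R b) x"
proof (cases "x = of_int j *\<^sub>R b")
  case True
  then show ?thesis using finf_nonneg[OF a_pos sigma] by (simp add: commN_eq)
next
  case False
  define r where "r = norm (x - of_int j *\<^sub>R b)"
  define D where "D = deriv V r"
  have "r > 0" "D \<le> 0" using False deriv_radial_nonpos by (auto simp: r_def D_def)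
  have "0 \<le> (norm (orth_comp b x))\<^sup>2 * ffun_ratio_sum a \<sigma> b N x"
    unfolding ffun_ratio_sum_def using a_pos by (intro mult_nonneg_nonneg sum_nonneg divide_nonneg_nonneg ffun_nonneg) auto
  then have "- 2 * D / r * (- 2 * finf a \<sigma> * r) \<le> commN a \<sigma> b N V (of_int j *\<^sub>R b) x"
    unfolding commN_eq r_def[symmetric] D_def[symmetric]
    using axial_part_ge[of x N] \<open>r > 0\<close> \<open>D \<le> 0\<close>
    by (intro mult_left_mono) (auto simp: r_def divide_nonpos_pos)
  then show ?thesis using \<open>r > 0\<close> \<open>D \<le> 0\<close> by (simp add: r_def D_def algebra_simps)
qed

text \<open>Where the commutator is negative, the nonnegative term \<open>y\<^sup>2 ffun_ratio_sum\<close> must be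
  outweighed by the axial term, which is at least \<open>-2 f(\<infinity>) r\<close>; and \<open>V'\<close> cannot vanish there.\<close>
lemma commN_negD:
  assumes "commN a \<sigma> b N V (of_int j *\<^sub>R b) x < 0"
  shows "x \<in> closure {z. V (norm (z - of_int j *\<^sub>R b)) \<noteq> 0}"
    and "(norm (orth_comp b x))\<^sup>2 * ffun_ratio_sum a \<sigma> b N x < 2 * finf a \<sigma> * norm (x - of_int j *\<^sub>R b)"
    and "x \<noteq> of_int j *\<^sub>R b"
proof -
  define r where "r = norm (x - of_int j *\<^sub>R b)"
  define D where "D = deriv V r"
  define A where "A = (x \<bullet> sgn b - of_int j * norm b)
    * lattice_sum (axial_field a \<sigma> (norm (orth_comp b x))) (norm b) N (x \<bullet> sgn b)"
  have comm: "commN a \<sigma> b N V (of_int j *\<^sub>R b) x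
    = - 2 * D / r * (A + (norm (orth_comp b x))\<^sup>2 * ffun_ratio_sum a \<sigma> b N x)"
    unfolding commN_eq r_def D_def A_def ..
  show "x \<noteq> of_int j *\<^sub>R b" using assms comm by (auto simp: r_def)
  then have "r > 0" "D \<le> 0" using deriv_radial_nonpos by (auto simp: r_def D_def)
  have "D \<noteq> 0" using assms comm by auto
  have "A + (norm (orth_comp b x))\<^sup>2 * ffun_ratio_sum a \<sigma> b N x < 0"
  proof (rule ccontr)
    assume "\<not> A + (norm (orth_comp b x))\<^sup>2 * ffun_ratio_sum a \<sigma> b N x < 0"
    moreover have "0 \<le> - 2 * D / r" using \<open>r > 0\<close> \<open>D \<le> 0\<close> by (intro divide_nonneg_pos) auto
    ultimately have "0 \<le> commN a \<sigma> b N V (of_int j *\<^sub>R b) x"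
      unfolding comm by (intro mult_nonneg_nonneg) auto
    then show False using assms by simp
  qed
  then show "(norm (orth_comp b x))\<^sup>2 * ffun_ratio_sum a \<sigma> b N x < 2 * finf a \<sigma> * r"
    using axial_part_ge[of x N] unfolding A_def r_def by linarith
  show "x \<in> closure {z. V (norm (z - of_int j *\<^sub>R b)) \<noteq> 0}"
  proof (rule ccontr)
    assume "x \<notin> closure {z. V (norm (z - of_int j *\<^sub>R b)) \<noteq> 0}"
    then have "D = 0"
      unfolding D_def r_def using \<open>x \<noteq> of_int j *\<^sub>R b\<close> by (rule deriv_radial_eq_0_outside_support)
    with \<open>D \<noteq> 0\<close> show False ..
  qed
qed

lemma commN_neg_orth_comp_bound:
  fixes x :: 'a
  defines "y \<equiv> norm (orth_comp b x)" and "r \<equiv> norm (x - of_int j *\<^sub>R b)"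
  assumes "commN a \<sigma> b N V (of_int j *\<^sub>R b) x < 0"
  shows "(1 + a) powr (- \<sigma>) * (min y 1) ^ 3 * harm (Suc N) < 2 * finf a \<sigma> * r * (r + norm b)"
proof (cases "y = 0")
  case True
  have "r > 0" using commN_negD(3)[OF assms(3)] by (simp add: r_def)
  moreover have "0 < 2 * finf a \<sigma> * r"
    using commN_negD(2)[OF assms(3)] True by (simp add: y_def r_def)
  ultimately show ?thesis using True by (simp add: add_pos_nonneg)
next
  case False
  then have "y > 0" by (simp add: y_def)
  have "r > 0" using commN_negD(3)[OF assms(3)] by (simp add: r_def)
  let ?\<kappa> = "(1 + a) powr (- \<sigma>)"
  have "(min y 1)\<^sup>2 \<le> y\<^sup>2" using \<open>y > 0\<close> by (intro power_mono) auto
  then have "(min y 1)\<^sup>2 * min y 1 \<le> y\<^sup>2 * min y 1" using \<open>y > 0\<close> by (intro mult_right_mono) auto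
  then have "(min y 1) ^ 3 \<le> y\<^sup>2 * min y 1" by (simp add: power2_eq_square power3_eq_cube)
  then have "?\<kappa> * (min y 1) ^ 3 * harm (Suc N) \<le> ?\<kappa> * (y\<^sup>2 * min y 1) * harm (Suc N)"
    by (intro mult_right_mono mult_left_mono) (auto simp: harm_nonneg)
  also have "\<dots> = y\<^sup>2 * (?\<kappa> * min y 1) * harm (Suc N)" by (simp add: algebra_simps)
  also have "\<dots> \<le> y\<^sup>2 * ffun a \<sigma> y * harm (Suc N)"
    using \<open>y > 0\<close> a_pos sigma by (intro mult_right_mono mult_left_mono ffun_ge_min) (auto simp: harm_nonneg)
  also have "\<dots> = y\<^sup>2 * (ffun a \<sigma> y / (r + norm b) * harm (Suc N)) * (r + norm b)"
    using \<open>r > 0\<close> add_pos_nonneg[OF \<open>r > 0\<close> norm_ge_zero[of b]] by (simp add: field_simps)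
  also have "\<dots> \<le> y\<^sup>2 * ffun_ratio_sum a \<sigma> b N x * (r + norm b)"
    using \<open>r > 0\<close> \<open>y > 0\<close> a_pos j unfolding y_def r_def
    by (intro mult_right_mono mult_left_mono ffun_ratio_sum_ge) auto
  also have "\<dots> < 2 * finf a \<sigma> * r * (r + norm b)"
    using commN_negD(2)[OF assms(3)] \<open>r > 0\<close>
    by (intro mult_strict_right_mono) (auto simp: y_def r_def add_pos_nonneg)
  finally show ?thesis .
qed

lemma commN_neg_uniform_bound:
  fixes x :: 'a
  assumes R: "\<forall>z\<in>closure {z. V (norm (z - of_int j *\<^sub>R b)) \<noteq> 0}. norm (z - of_int j *\<^sub>R b) \<le> R"
    and neg: "commN a \<sigma> b N V (of_int j *\<^sub>R b) x < 0"
  shows "norm (orth_comp b x) \<le> R"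
    and "(1 + a) powr (- \<sigma>) * (min (norm (orth_comp b x)) 1) ^ 3 * harm (Suc N)
      < 2 * finf a \<sigma> * R * (R + norm b)"
proof -
  have "norm (x - of_int j *\<^sub>R b) \<le> R" using R commN_negD(1)[OF neg] by blast
  then show "norm (orth_comp b x) \<le> R" using norm_orth_comp_le order_trans by blast
  have "0 \<le> R" using \<open>norm (x - of_int j *\<^sub>R b) \<le> R\<close> by (metis norm_ge_zero order_trans)
  have "2 * finf a \<sigma> * norm (x - of_int j *\<^sub>R b) * (norm (x - of_int j *\<^sub>R b) + norm b)
      \<le> 2 * finf a \<sigma> * R * (R + norm b)"
    using \<open>norm (x - of_int j *\<^sub>R b) \<le> R\<close> \<open>0 \<le> R\<close> finf_nonneg[OF a_pos sigma]
    by (intro mult_mono mult_left_mono add_right_mono) auto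
  with commN_neg_orth_comp_bound[OF neg] show "(1 + a) powr (- \<sigma>) * (min (norm (orth_comp b x)) 1) ^ 3
      * harm (Suc N) < 2 * finf a \<sigma> * R * (R + norm b)"
    by linarith
qed

end

lemma compact_imp_norm_diff_bounded:
  fixes S :: "'a::real_normed_vector set"
  assumes "compact S"
  shows "\<exists>R. \<forall>z\<in>S. norm (z - p) \<le> R"
  using compact_imp_bounded[OF assms] unfolding bounded_any_center[of _ p]
  by (simp add: dist_norm norm_minus_commute)

text \<open>The witness is \<open>\<delta>\<^sub>N = (C / (c H\<^sub>N))\<^sup>1\<^sup>/\<^sup>3\<close> once this is below 1, and \<open>R\<close> before.\<close>
lemma min_cube_bound_vanishes:
  fixes c C R :: real and H :: "nat \<Rightarrow> real"
  assumes "c > 0" "\<And>N. H N > 0" "filterlim H at_top sequentially"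
  shows "\<exists>\<delta>. \<delta> \<longlonglongrightarrow> 0 \<and>
    (\<forall>N y. 0 \<le> y \<longrightarrow> y \<le> R \<longrightarrow> c * (min y 1) ^ 3 * H N < C \<longrightarrow> y \<le> \<delta> N)"
proof -
  define q where "q N = C / (c * H N)" for N
  define \<delta> where "\<delta> N = (if q N < 1 then root 3 (q N) else R)" for N
  have "q \<longlonglongrightarrow> 0"
    unfolding q_def using assms
    by (intro tendsto_divide_0[OF tendsto_const] filterlim_at_top_imp_at_infinity
        filterlim_tendsto_pos_mult_at_top[OF tendsto_const]) auto
  then have "eventually (\<lambda>N. q N < 1) sequentially" by (rule order_tendstoD) simp
  then have "eventually (\<lambda>N. root 3 (q N) = \<delta> N) sequentially"
    by eventually_elim (simp add: \<delta>_def)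
  moreover have "(\<lambda>N. root 3 (q N)) \<longlonglongrightarrow> 0"
    using tendsto_real_root[OF \<open>q \<longlonglongrightarrow> 0\<close>, of 3] by simp
  ultimately have "\<delta> \<longlonglongrightarrow> 0" by (rule Lim_transform_eventually[rotated])
  moreover have "y \<le> \<delta> N" if "0 \<le> y" "y \<le> R" "c * (min y 1) ^ 3 * H N < C" for N y
  proof (cases "q N < 1")
    case True
    have "(min y 1) ^ 3 < q N"
      using that(3) assms by (simp add: q_def pos_less_divide_eq mult.commute mult.left_commute)
    then have "y ^ 3 < q N" using True by (cases "y \<le> 1") (auto simp: min_def)
    then have "y \<le> root 3 (q N)"
      using that(1) real_root_le_mono[of 3 "y ^ 3" "q N"] by (simp add: real_root_power_cancel)
    then show ?thesis using True by (simp add: \<delta>_def)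
  qed (use that in \<open>simp add: \<delta>_def\<close>)
  ultimately show ?thesis by blast
qed

theorem proposition2p4:
  fixes a \<sigma> :: real and b :: "real ^ 'n" and V :: "int \<Rightarrow> real \<Rightarrow> real"
  assumes dim: "CARD('n) \<ge> 3"
    and a_pos: "a > 0" and sigma: "\<sigma> > 1/2"
    and b_nz: "b \<noteq> 0"
    and smooth: "\<And>j. j \<in> {-1, 1} \<Longrightarrow> smooth_fun (\<lambda>x. V j (norm (x - of_int j *\<^sub>R b)))"
    and decr: "\<And>j r s. j \<in> {-1, 1} \<Longrightarrow> 0 \<le> r \<Longrightarrow> r \<le> s \<Longrightarrow> V j s \<le> V j r"
    and compact_supp: "\<And>j. j \<in> {-1, 1} \<Longrightarrow>
          compact (closure {x. V j (norm (x - of_int j *\<^sub>R b)) \<noteq> 0})"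
  shows
    "(\<forall>N\<ge>1. \<forall>j\<in>{-1, 1}. \<forall>x.
        commN a \<sigma> b N (V j) (of_int j *\<^sub>R b) x \<ge>
          - 4 * finf a \<sigma> * \<bar>deriv (V j) (norm (x - of_int j *\<^sub>R b))\<bar> *
            indicator {y. commN a \<sigma> b N (V j) (of_int j *\<^sub>R b) y < 0} x)
     \<and> (\<exists>\<delta> :: nat \<Rightarrow> real. \<delta> \<longlonglongrightarrow> 0 \<and>
        (\<forall>N\<ge>1. \<forall>j\<in>{-1, 1}.
           {x. commN a \<sigma> b N (V j) (of_int j *\<^sub>R b) x < 0}
             \<subseteq> {x. norm (orth_comp b x) \<le> \<delta> N}
                \<inter> closure {x. V j (norm (x - of_int j *\<^sub>R b)) \<noteq> 0}))"
proof -
  have diff: "(\<lambda>z. V j (norm (z - of_int j *\<^sub>R b))) differentiable at x" if "j \<in> {-1, 1}" for j x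
    using smooth[OF that] by (cases rule: smooth_fun.cases) (simp add: differentiable_on_def)
  obtain R\<^sub>1 R\<^sub>2 where
    "\<forall>z\<in>closure {x. V 1 (norm (x - of_int 1 *\<^sub>R b)) \<noteq> 0}. norm (z - of_int 1 *\<^sub>R b) \<le> R\<^sub>1"
    "\<forall>z\<in>closure {x. V (-1) (norm (x - of_int (-1) *\<^sub>R b)) \<noteq> 0}. norm (z - of_int (-1) *\<^sub>R b) \<le> R\<^sub>2"
    using compact_imp_norm_diff_bounded compact_supp by (metis insertCI)
  then have R: "\<forall>z\<in>closure {x. V j (norm (x - of_int j *\<^sub>R b)) \<noteq> 0}.
      norm (z - of_int j *\<^sub>R b) \<le> max R\<^sub>1 R\<^sub>2" if "j \<in> {-1, 1}" for j
    using that by force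
  define C where "C = 2 * finf a \<sigma> * max R\<^sub>1 R\<^sub>2 * (max R\<^sub>1 R\<^sub>2 + norm b)"
  have "\<exists>\<delta>. \<delta> \<longlonglongrightarrow> 0 \<and> (\<forall>N y. 0 \<le> y \<longrightarrow> y \<le> max R\<^sub>1 R\<^sub>2 \<longrightarrow>
      (1 + a) powr (- \<sigma>) * (min y 1) ^ 3 * harm (Suc N) < C \<longrightarrow> y \<le> \<delta> N)"
    by (rule min_cube_bound_vanishes) (use a_pos filterlim_compose[OF harm_at_top filterlim_Suc] in auto)
  then obtain \<delta> where "\<delta> \<longlonglongrightarrow> 0" and \<delta>: "\<And>N y. 0 \<le> y \<Longrightarrow> y \<le> max R\<^sub>1 R\<^sub>2 \<Longrightarrow>
      (1 + a) powr (- \<sigma>) * (min y 1) ^ 3 * harm (Suc N) < C \<Longrightarrow> y \<le> \<delta> N"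
    by blast
  show ?thesis
  proof (intro conjI exI[of _ \<delta>] allI impI ballI subsetI)
    fix N :: nat and j :: int and x :: "real ^ 'n"
    assume j: "j \<in> {-1, 1}"
    note setting = a_pos sigma j diff[OF j] decr[OF j]
    show "- 4 * finf a \<sigma> * \<bar>deriv (V j) (norm (x - of_int j *\<^sub>R b))\<bar> *
        indicator {y. commN a \<sigma> b N (V j) (of_int j *\<^sub>R b) y < 0} x
      \<le> commN a \<sigma> b N (V j) (of_int j *\<^sub>R b) x"
      using commN_ge[OF setting, of x N] by (simp add: indicator_def)
    assume "x \<in> {x. commN a \<sigma> b N (V j) (of_int j *\<^sub>R b) x < 0}"
    then have neg: "commN a \<sigma> b N (V j) (of_int j *\<^sub>R b) x < 0" by simp
    have "norm (orth_comp b x) \<le> \<delta> N"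
      using commN_neg_uniform_bound[OF setting R[OF j] neg] by (intro \<delta>) (auto simp: C_def)
    then show "x \<in> {x. norm (orth_comp b x) \<le> \<delta> N} \<inter> closure {x. V j (norm (x - of_int j *\<^sub>R b)) \<noteq> 0}"
      using commN_negD(1)[OF setting neg] by simp
  qed fact
qed

end
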